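(* In the Euclidean plane $\mathbb R^2$, let $\mu\neq 0$ and let $\gamma$ be a critical curve of $\mathbf{\Theta}_\mu$ whose first-integral constant $d$ (defined by $\mu^4\kappa_s^2=d\,e^{-2\mu\kappa}-(\mu\kappa-1)^2$) is positive. Then for every $\lambda>0$, the dilation $\widetilde\gamma(s)=\lambda\gamma(s/\lambda)$ is a critical curve of $\mathbf{\Theta}_{\lambda\mu}$ whose first-integral constant is positive (indeed equal to $d$).
   Context: A critical curve of $\mathbf{\Theta}_\mu=\int_\gamma e^{\mu\kappa}ds$ in $\mathbb R^2$ is an arc-length parametrized curve whose signed curvature satisfies $\frac{d^2}{ds^2}(e^{\mu\kappa})+(\kappa^2-\kappa/\mu)e^{\mu\kappa}=0$. *)

theory Defs
  imports "HOL-Analysis.Analysis"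
begin

definition tangent :: "(real \<Rightarrow> real^2) \<Rightarrow> real \<Rightarrow> real^2" where
  "tangent \<gamma> s = vector_derivative \<gamma> (at s)"

definition accel :: "(real \<Rightarrow> real^2) \<Rightarrow> real \<Rightarrow> real^2" where
  "accel \<gamma> s = vector_derivative (tangent \<gamma>) (at s)"

text \<open>Signed curvature of an arc-length parametrized curve: kappa = det(gamma', gamma'').\<close>
definition signed_curvature :: "(real \<Rightarrow> real^2) \<Rightarrow> real \<Rightarrow> real" where
  "signed_curvature \<gamma> s =
     tangent \<gamma> s $ 1 * accel \<gamma> s $ 2 - tangent \<gamma> s $ 2 * accel \<gamma> s $ 1"

definition arc_length_curve :: "real set \<Rightarrow> (real \<Rightarrow> real^2) \<Rightarrow> bool" where
  "arc_length_curve I \<gamma> \<longleftrightarrow> open I \<and>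
     (\<forall>s\<in>I. \<gamma> differentiable (at s) \<and> tangent \<gamma> differentiable (at s)
            \<and> norm (tangent \<gamma> s) = 1)"

definition critical_curve :: "real \<Rightarrow> real set \<Rightarrow> (real \<Rightarrow> real^2) \<Rightarrow> bool" where
  "critical_curve \<mu> I \<gamma> \<longleftrightarrow> arc_length_curve I \<gamma> \<and>
     (\<exists>f' f''. \<forall>s\<in>I.
        ((\<lambda>t. exp (\<mu> * signed_curvature \<gamma> t)) has_real_derivative f' s) (at s) \<and>
        (f' has_real_derivative f'' s) (at s) \<and>
        f'' s + ((signed_curvature \<gamma> s)\<^sup>2 - signed_curvature \<gamma> s / \<mu>)
                 * exp (\<mu> * signed_curvature \<gamma> s) = 0)"

definition first_integral_const :: "real \<Rightarrow> real set \<Rightarrow> (real \<Rightarrow> real^2) \<Rightarrow> real \<Rightarrow> bool" where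
  "first_integral_const \<mu> I \<gamma> d \<longleftrightarrow>
     (\<forall>s\<in>I. \<mu>^4 * (deriv (signed_curvature \<gamma>) s)\<^sup>2
              = d * exp (-2 * \<mu> * signed_curvature \<gamma> s) - (\<mu> * signed_curvature \<gamma> s - 1)\<^sup>2)"

definition dilation :: "real \<Rightarrow> (real \<Rightarrow> real^2) \<Rightarrow> real \<Rightarrow> real^2" where
  "dilation c \<gamma> s = c *\<^sub>R \<gamma> (s / c)"

end

theory Submission imports Defs begin

text \<open>Under the dilation \<open>s \<mapsto> c s\<close> the unit tangent is unchanged and the
acceleration is divided by \<open>c\<close>, so the new curvature is \<open>\<kappa>(s/c)/c\<close> and
\<open>(c \<mu>) \<kappa>\<^sub>c(s) = \<mu> \<kappa>(s/c)\<close>. Thus \<open>exp((c \<mu>) \<kappa>\<^sub>c)\<close> is \<open>exp(\<mu> \<kappa>)\<close>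
reparametrized; its second derivative acquires the factor \<open>1/c\<^sup>2\<close>, exactly as
\<open>\<kappa>\<^sup>2 - \<kappa>/\<mu>\<close> does, so the Euler--Lagrange equation is preserved. Likewise
\<open>\<kappa>\<^sub>c' = \<kappa>'(s/c)/c\<^sup>2\<close> gives \<open>(c \<mu>)\<^sup>4 \<kappa>\<^sub>c'\<^sup>2 = \<mu>\<^sup>4 \<kappa>'\<^sup>2\<close>, so the
first integral holds with the same constant \<open>d\<close>.\<close>

lemma has_vector_derivative_rescale:
  fixes g :: "real \<Rightarrow> 'a::real_normed_vector"
  assumes "(g has_vector_derivative v) (at (t / c))"
  shows "((\<lambda>s. g (s / c)) has_vector_derivative v /\<^sub>R c) (at t)"
proof -
  have "((\<lambda>s. s / c) has_vector_derivative 1 / c) (at t)"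
    using DERIV_cdivide[OF DERIV_ident, of c t]
    by (simp add: has_real_derivative_iff_has_vector_derivative)
  from vector_diff_chain_at[OF this] assms show ?thesis
    by (simp add: o_def divide_inverse_commute)
qed

lemma has_real_derivative_rescale:
  assumes "(f has_real_derivative D) (at (t / c))"
  shows "((\<lambda>s. f (s / c)) has_real_derivative D / c) (at t)"
  using has_vector_derivative_rescale[of f D t c] assms
  by (simp add: has_real_derivative_iff_has_vector_derivative divide_inverse_commute)

lemma in_scaled_image_iff:
  fixes c :: real
  assumes "c \<noteq> 0"
  shows "t \<in> (\<lambda>s. c * s) ` I \<longleftrightarrow> t / c \<in> I"
  using assms by (auto simp: image_iff intro: bexI[of _ "t / c"])

lemma open_scaled_image:
  fixes c :: real
  assumes "open I" and "c \<noteq> 0"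
  shows "open ((\<lambda>s. c * s) ` I)"
  using open_scaling[OF assms(2,1)] by simp

lemma dilation_has_vector_derivative:
  assumes "c \<noteq> 0" and "\<gamma> differentiable (at (t / c))"
  shows "(dilation c \<gamma> has_vector_derivative tangent \<gamma> (t / c)) (at t)"
proof -
  have "(\<gamma> has_vector_derivative tangent \<gamma> (t / c)) (at (t / c))"
    using assms(2) by (simp add: tangent_def vector_derivative_works[symmetric])
  from bounded_linear.has_vector_derivative[OF bounded_linear_scaleR_right has_vector_derivative_rescale[OF this], of c]
  show ?thesis
    using assms(1) by (simp add: dilation_def[abs_def])
qed

lemma tangent_dilation:
  assumes "c \<noteq> 0" and "\<gamma> differentiable (at (t / c))"
  shows "tangent (dilation c \<gamma>) t = tangent \<gamma> (t / c)"
  using dilation_has_vector_derivative[OF assms] by (simp add: tangent_def vector_derivative_at)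

lemma tangent_dilation_has_vector_derivative:
  assumes "arc_length_curve I \<gamma>" and "c \<noteq> 0" and "t / c \<in> I"
  shows "(tangent (dilation c \<gamma>) has_vector_derivative accel \<gamma> (t / c) /\<^sub>R c) (at t)"
proof -
  have "open I" and diff: "\<And>s. s \<in> I \<Longrightarrow> \<gamma> differentiable (at s) \<and> tangent \<gamma> differentiable (at s)"
    using assms(1) by (auto simp: arc_length_curve_def)
  have "(tangent \<gamma> has_vector_derivative accel \<gamma> (t / c)) (at (t / c))"
    using diff[OF assms(3)] by (simp add: accel_def vector_derivative_works[symmetric])
  from has_vector_derivative_rescale[OF this]
  show ?thesis
  proof (rule has_vector_derivative_transform_within_open)
    show "open ((\<lambda>s. c * s) ` I)" and "t \<in> (\<lambda>s. c * s) ` I"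
      using open_scaled_image[OF \<open>open I\<close> assms(2)] in_scaled_image_iff[OF assms(2)] assms(3)
      by auto
    show "tangent \<gamma> (s / c) = tangent (dilation c \<gamma>) s" if "s \<in> (\<lambda>s. c * s) ` I" for s
      using that diff tangent_dilation[OF assms(2)] in_scaled_image_iff[OF assms(2)] by metis
  qed
qed

lemma signed_curvature_dilation:
  assumes "arc_length_curve I \<gamma>" and "c \<noteq> 0" and "t / c \<in> I"
  shows "signed_curvature (dilation c \<gamma>) t = signed_curvature \<gamma> (t / c) / c"
proof -
  have "tangent (dilation c \<gamma>) t = tangent \<gamma> (t / c)"
    using assms by (simp add: arc_length_curve_def tangent_dilation)
  moreover have "accel (dilation c \<gamma>) t = accel \<gamma> (t / c) /\<^sub>R c"
    using tangent_dilation_has_vector_derivative[OF assms]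
    by (simp add: accel_def vector_derivative_at)
  ultimately show ?thesis
    by (simp add: signed_curvature_def divide_inverse_commute algebra_simps)
qed

lemma arc_length_curve_dilation:
  assumes "arc_length_curve I \<gamma>" and "c \<noteq> 0"
  shows "arc_length_curve ((\<lambda>s. c * s) ` I) (dilation c \<gamma>)"
  unfolding arc_length_curve_def
proof (intro conjI ballI)
  show "open ((\<lambda>s. c * s) ` I)"
    using assms open_scaled_image by (auto simp: arc_length_curve_def)
  fix t assume "t \<in> (\<lambda>s. c * s) ` I"
  then have "t / c \<in> I"
    using in_scaled_image_iff[OF assms(2)] by blast
  then have "\<gamma> differentiable (at (t / c))" and unit: "norm (tangent \<gamma> (t / c)) = 1"
    using assms(1) by (auto simp: arc_length_curve_def)
  show "dilation c \<gamma> differentiable (at t)"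
    using dilation_has_vector_derivative[OF assms(2) \<open>\<gamma> differentiable _\<close>]
    by (rule differentiableI_vector)
  show "tangent (dilation c \<gamma>) differentiable (at t)"
    using tangent_dilation_has_vector_derivative[OF assms \<open>t / c \<in> I\<close>]
    by (rule differentiableI_vector)
  show "norm (tangent (dilation c \<gamma>) t) = 1"
    using unit tangent_dilation[OF assms(2) \<open>\<gamma> differentiable _\<close>] by simp
qed

lemma critical_curve_dilation:
  assumes "critical_curve \<mu> I \<gamma>" and "c \<noteq> 0"
  shows "critical_curve (c * \<mu>) ((\<lambda>s. c * s) ` I) (dilation c \<gamma>)"
proof -
  let ?\<kappa> = "signed_curvature \<gamma>" and ?\<kappa>\<^sub>c = "signed_curvature (dilation c \<gamma>)"
  have arc: "arc_length_curve I \<gamma>"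
    using assms(1) by (simp add: critical_curve_def)
  from assms(1) obtain f' f'' where f: "\<And>s. s \<in> I \<Longrightarrow>
      ((\<lambda>t. exp (\<mu> * ?\<kappa> t)) has_real_derivative f' s) (at s) \<and>
      (f' has_real_derivative f'' s) (at s) \<and>
      f'' s + ((?\<kappa> s)\<^sup>2 - ?\<kappa> s / \<mu>) * exp (\<mu> * ?\<kappa> s) = 0"
    unfolding critical_curve_def by blast
  have \<kappa>\<^sub>c: "?\<kappa>\<^sub>c t = ?\<kappa> (t / c) / c" if "t \<in> (\<lambda>s. c * s) ` I" for t
    using signed_curvature_dilation[OF arc assms(2)] in_scaled_image_iff[OF assms(2)] that
    by blast
  show ?thesis
    unfolding critical_curve_def
  proof (intro conjI exI ballI arc_length_curve_dilation[OF arc assms(2)])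
    fix t assume t: "t \<in> (\<lambda>s. c * s) ` I"
    then have "t / c \<in> I"
      using in_scaled_image_iff[OF assms(2)] by blast
    note f = f[OF this]
    show "((\<lambda>t. exp (c * \<mu> * ?\<kappa>\<^sub>c t)) has_real_derivative f' (t / c) / c) (at t)"
    proof (rule has_field_derivative_transform_within_open)
      show "((\<lambda>t. exp (\<mu> * ?\<kappa> (t / c))) has_real_derivative f' (t / c) / c) (at t)"
        using has_real_derivative_rescale f by blast
      show "open ((\<lambda>s. c * s) ` I)"
        using arc assms(2) open_scaled_image by (auto simp: arc_length_curve_def)
      show "exp (\<mu> * ?\<kappa> (s / c)) = exp (c * \<mu> * ?\<kappa>\<^sub>c s)" if "s \<in> (\<lambda>s. c * s) ` I" for s
        using \<kappa>\<^sub>c[OF that] assms(2) by simp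
    qed (rule t)
    show "((\<lambda>t. f' (t / c) / c) has_real_derivative f'' (t / c) / c\<^sup>2) (at t)"
      using DERIV_cdivide[OF has_real_derivative_rescale, of f' "f'' (t / c)"] f
      by (simp add: power2_eq_square)
    have "f'' (t / c) / c\<^sup>2 + ((?\<kappa>\<^sub>c t)\<^sup>2 - ?\<kappa>\<^sub>c t / (c * \<mu>)) * exp (c * \<mu> * ?\<kappa>\<^sub>c t)
        = (f'' (t / c) + ((?\<kappa> (t / c))\<^sup>2 - ?\<kappa> (t / c) / \<mu>) * exp (\<mu> * ?\<kappa> (t / c))) / c\<^sup>2"
      using assms(2) by (simp add: \<kappa>\<^sub>c[OF t] field_simps power2_eq_square)
    then show "f'' (t / c) / c\<^sup>2 + ((?\<kappa>\<^sub>c t)\<^sup>2 - ?\<kappa>\<^sub>c t / (c * \<mu>)) * exp (c * \<mu> * ?\<kappa>\<^sub>c t) = 0"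
      using f by simp
  qed
qed

lemma critical_curve_curvature_differentiable:
  assumes "critical_curve \<mu> I \<gamma>" and "\<mu> \<noteq> 0" and "s \<in> I"
  shows "signed_curvature \<gamma> differentiable (at s)"
proof -
  \<comment> \<open>Criticality only makes \<open>exp (\<mu> \<kappa>)\<close> differentiable; for \<open>\<mu> \<noteq> 0\<close> we recover \<open>\<kappa> = ln (exp (\<mu> \<kappa>)) / \<mu>\<close>.\<close>
  let ?E = "\<lambda>t. exp (\<mu> * signed_curvature \<gamma> t)"
  obtain E' where "(?E has_real_derivative E') (at s)"
    using assms(1,3) unfolding critical_curve_def by blast
  from DERIV_cdivide[OF DERIV_chain2[OF DERIV_ln_divide this], of \<mu>]
  have "((\<lambda>t. ln (?E t) / \<mu>) has_real_derivative 1 / ?E s * E' / \<mu>) (at s)"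
    by simp
  moreover have "(\<lambda>t. ln (?E t) / \<mu>) = signed_curvature \<gamma>"
    using assms(2) by auto
  ultimately show ?thesis
    using DERIV_deriv_iff_real_differentiable DERIV_imp_deriv by metis
qed

lemma deriv_signed_curvature_dilation:
  assumes "arc_length_curve I \<gamma>" and "c \<noteq> 0" and "t / c \<in> I"
    and "signed_curvature \<gamma> differentiable (at (t / c))"
  shows "deriv (signed_curvature (dilation c \<gamma>)) t = deriv (signed_curvature \<gamma>) (t / c) / c\<^sup>2"
proof (rule DERIV_imp_deriv)
  let ?\<kappa> = "signed_curvature \<gamma>"
  show "(signed_curvature (dilation c \<gamma>) has_real_derivative deriv ?\<kappa> (t / c) / c\<^sup>2) (at t)"
  proof (rule has_field_derivative_transform_within_open)
    show "((\<lambda>s. ?\<kappa> (s / c) / c) has_real_derivative deriv ?\<kappa> (t / c) / c\<^sup>2) (at t)"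
      using DERIV_cdivide[OF has_real_derivative_rescale, of ?\<kappa> _ t c c] assms(4)
      by (simp add: DERIV_deriv_iff_real_differentiable power2_eq_square)
    show "open ((\<lambda>s. c * s) ` I)"
      using assms(1,2) open_scaled_image by (auto simp: arc_length_curve_def)
    show "t \<in> (\<lambda>s. c * s) ` I"
      using assms(2,3) in_scaled_image_iff by blast
    show "?\<kappa> (s / c) / c = signed_curvature (dilation c \<gamma>) s" if "s \<in> (\<lambda>s. c * s) ` I" for s
      using signed_curvature_dilation[OF assms(1,2)] in_scaled_image_iff[OF assms(2)] that
      by simp
  qed
qed

lemma first_integral_const_dilation:
  assumes "arc_length_curve I \<gamma>" and "c \<noteq> 0"
    and "\<forall>s\<in>I. signed_curvature \<gamma> differentiable (at s)"
    and "first_integral_const \<mu> I \<gamma> d"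
  shows "first_integral_const (c * \<mu>) ((\<lambda>s. c * s) ` I) (dilation c \<gamma>) d"
  unfolding first_integral_const_def
proof
  fix t assume "t \<in> (\<lambda>s. c * s) ` I"
  then have t: "t / c \<in> I"
    using in_scaled_image_iff[OF assms(2)] by blast
  have \<kappa>\<^sub>c: "c * \<mu> * signed_curvature (dilation c \<gamma>) t = \<mu> * signed_curvature \<gamma> (t / c)"
    using signed_curvature_dilation[OF assms(1,2) t] assms(2) by simp
  have "(c * \<mu>) ^ 4 * (deriv (signed_curvature (dilation c \<gamma>)) t)\<^sup>2
      = \<mu> ^ 4 * (deriv (signed_curvature \<gamma>) (t / c))\<^sup>2"
    using deriv_signed_curvature_dilation[OF assms(1,2) t] assms(2,3) t
    by (simp add: field_simps power2_eq_square numeral_eq_Suc)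
  also have "\<dots> = d * exp (-2 * \<mu> * signed_curvature \<gamma> (t / c))
                 - (\<mu> * signed_curvature \<gamma> (t / c) - 1)\<^sup>2"
    using assms(4) t by (simp add: first_integral_const_def)
  also have "\<dots> = d * exp (-2 * (c * \<mu>) * signed_curvature (dilation c \<gamma>) t)
                 - (c * \<mu> * signed_curvature (dilation c \<gamma>) t - 1)\<^sup>2"
    by (metis \<kappa>\<^sub>c mult.assoc)
  finally show "(c * \<mu>) ^ 4 * (deriv (signed_curvature (dilation c \<gamma>)) t)\<^sup>2
      = d * exp (-2 * (c * \<mu>) * signed_curvature (dilation c \<gamma>) t)
        - (c * \<mu> * signed_curvature (dilation c \<gamma>) t - 1)\<^sup>2" .
qed

theorem proposition4p1:
  fixes \<mu> d c :: real and I :: "real set" and \<gamma> :: "real \<Rightarrow> real^2"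
  assumes "\<mu> \<noteq> 0"
    and "critical_curve \<mu> I \<gamma>"
    and "first_integral_const \<mu> I \<gamma> d"
    and "d > 0"
    and "c > 0"
  shows "critical_curve (c * \<mu>) ((\<lambda>s. c * s) ` I) (dilation c \<gamma>)
         \<and> first_integral_const (c * \<mu>) ((\<lambda>s. c * s) ` I) (dilation c \<gamma>) d"
proof
  have "c \<noteq> 0"
    using assms(5) by simp
  then show "critical_curve (c * \<mu>) ((\<lambda>s. c * s) ` I) (dilation c \<gamma>)"
    using critical_curve_dilation assms(2) by blast
  have "arc_length_curve I \<gamma>"
    using assms(2) by (simp add: critical_curve_def)
  moreover have "\<forall>s\<in>I. signed_curvature \<gamma> differentiable (at s)"
    using critical_curve_curvature_differentiable assms(1,2) by blast
  ultimately show "first_integral_const (c * \<mu>) ((\<lambda>s. c * s) ` I) (dilation c \<gamma>) d"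
    using first_integral_const_dilation \<open>c \<noteq> 0\<close> assms(3) by blast
qed

end
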